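(* Every finite nonempty set of integers is the signed degree set of some connected signed bipartite graph.
   Context: A signed bipartite graph $G(U,V)$ is a finite simple bipartite graph with bipartition $U, V$ (both nonempty, every edge joining a vertex of $U$ to a vertex of $V$) in which each edge is assigned a sign, positive or negative. The signed degree of a vertex $x$ is $\mathrm{sdeg}(x) = d^+(x) - d^-(x)$, where $d^+(x)$ (resp. $d^-(x)$) is the number of positive (resp. negative) edges incident with $x$. The signed degree set of $G(U,V)$ is the set of distinct signed degrees of its vertices. $G(U,V)$ is called connected if each vertex of $U$ is connected (by a path) to every vertex of $V$. *)

theory Defs
  imports Main
begin

text \<open>P is the set of positive edges, N the set of negative edges; an edge is a pair (u,v)
  with u in U and v in V. Simplicity: each edge occurs at most once and carries one sign.\<close>

definition signed_bipartite :: "nat set \<Rightarrow> nat set \<Rightarrow> (nat \<times> nat) set \<Rightarrow> (nat \<times> nat) set \<Rightarrow> bool" where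
  "signed_bipartite U V P N \<longleftrightarrow>
     finite U \<and> finite V \<and> U \<noteq> {} \<and> V \<noteq> {} \<and> U \<inter> V = {} \<and>
     P \<subseteq> U \<times> V \<and> N \<subseteq> U \<times> V \<and> P \<inter> N = {}"

definition inc_deg :: "(nat \<times> nat) set \<Rightarrow> nat \<Rightarrow> nat" where
  "inc_deg E x = card {y. (x, y) \<in> E \<or> (y, x) \<in> E}"

definition sdeg :: "(nat \<times> nat) set \<Rightarrow> (nat \<times> nat) set \<Rightarrow> nat \<Rightarrow> int" where
  "sdeg P N x = int (inc_deg P x) - int (inc_deg N x)"

definition signed_degree_set :: "nat set \<Rightarrow> nat set \<Rightarrow> (nat \<times> nat) set \<Rightarrow> (nat \<times> nat) set \<Rightarrow> int set" where
  "signed_degree_set U V P N = sdeg P N ` (U \<union> V)"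

definition sb_connected :: "nat set \<Rightarrow> nat set \<Rightarrow> (nat \<times> nat) set \<Rightarrow> (nat \<times> nat) set \<Rightarrow> bool" where
  "sb_connected U V P N \<longleftrightarrow>
     (\<forall>u\<in>U. \<forall>v\<in>V. (u, v) \<in> ((P \<union> N) \<union> (P \<union> N)\<inverse>)\<^sup>*)"

end

theory Submission imports Defs begin

text \<open>A single value t is realised by K(n,n), n = |t| + 2, with a perfect
  matching of one sign and all other edges of the other sign: every signed degree is
  (n - 1) - 1 = |t| or its negative, and the graph stays connected when any one edge is deleted.
  To add t to a connected realisation G of S, put such a graph H on fresh vertices and perform a
  2-switch: replace a positive edge uv of G and a positive edge u'v' of H by the positive edges
  uv' and u'v. No vertex changes its numbers of positive and negative neighbours, and the union
  is connected, since deleting uv leaves every vertex of G joined to u or to v, and H - u'v'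
  together with the new edges joins u and v.\<close>

abbreviation reach :: "('a \<times> 'a) set \<Rightarrow> ('a \<times> 'a) set" where
  "reach E \<equiv> (E \<union> E\<inverse>)\<^sup>*"

definition nbrs :: "(nat \<times> nat) set \<Rightarrow> nat \<Rightarrow> nat set" where
  "nbrs E x = {y. (x, y) \<in> E \<or> (y, x) \<in> E}"

lemma inc_deg_eq_card_nbrs: "inc_deg E x = card (nbrs E x)"
  by (simp add: inc_deg_def nbrs_def)

lemma reach_sym: "(x, y) \<in> reach E \<Longrightarrow> (y, x) \<in> reach E"
  by (rule symD[OF sym_rtrancl[OF sym_Un_converse]])

lemma reach_mono: "(x, y) \<in> reach E \<Longrightarrow> E \<subseteq> F \<Longrightarrow> (x, y) \<in> reach F"
  using rtrancl_mono[of "E \<union> E\<inverse>" "F \<union> F\<inverse>"] by blast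

lemma reach_edge: "(x, y) \<in> E \<Longrightarrow> (x, y) \<in> reach E"
  by blast

text \<open>A walk that uses the edge (a, b) reaches a or b before it uses it for the first time.\<close>
lemma reach_Diff_edge:
  assumes "(w, z) \<in> reach E"
  shows "(w, z) \<in> reach (E - {(a, b)}) \<or> (w, a) \<in> reach (E - {(a, b)}) \<or> (w, b) \<in> reach (E - {(a, b)})"
  using assms
proof (induction rule: converse_rtrancl_induct)
  case base
  then show ?case by simp
next
  case (step y y')
  show ?case
  proof (cases "(y, y') \<in> (E - {(a, b)}) \<union> (E - {(a, b)})\<inverse>")
    case True
    then show ?thesis using step.IH by (meson converse_rtrancl_into_rtrancl)
  next
    case False
    then have "y = a \<or> y = b" using step.hyps(1) by auto
    then show ?thesis by auto
  qed
qed

lemma reach_root_if_sb_connected: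
  assumes "signed_bipartite U V P N" "sb_connected U V P N" "r \<in> U \<union> V" "x \<in> U \<union> V"
  shows "(x, r) \<in> reach (P \<union> N)"
proof -
  obtain u v where uv: "u \<in> U" "v \<in> V"
    using assms(1) unfolding signed_bipartite_def by blast
  have to_v: "(y, v) \<in> reach (P \<union> N)" if "y \<in> U \<union> V" for y
  proof (cases "y \<in> U")
    case True
    then show ?thesis using assms(2) uv unfolding sb_connected_def by blast
  next
    case False
    then have "(u, y) \<in> reach (P \<union> N)" "(u, v) \<in> reach (P \<union> N)"
      using assms(2) uv that unfolding sb_connected_def by auto
    then show ?thesis by (meson reach_sym rtrancl_trans)
  qed
  show ?thesis using to_v[OF assms(4)] to_v[OF assms(3)] by (meson reach_sym rtrancl_trans)
qed

lemma sb_connected_if_reach_root: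
  assumes "\<forall>x\<in>U \<union> V. (x, r) \<in> reach (P \<union> N)"
  shows "sb_connected U V P N"
  unfolding sb_connected_def
proof (intro ballI)
  fix u v assume "u \<in> U" "v \<in> V"
  then have "(u, r) \<in> reach (P \<union> N)" "(v, r) \<in> reach (P \<union> N)" using assms by auto
  then show "(u, v) \<in> reach (P \<union> N)" by (meson reach_sym rtrancl_trans)
qed

lemma sb_connected_mono:
  "sb_connected U V P N \<Longrightarrow> P \<union> N \<subseteq> P' \<union> N' \<Longrightarrow> sb_connected U V P' N'"
  unfolding sb_connected_def by (meson reach_mono)

lemma sb_connected_complete_bipartite_minus_edge:
  assumes "u \<in> U" "u' \<in> U" "u \<noteq> u'" "v \<in> V" "v' \<in> V" "v \<noteq> v'"
    and "U \<times> V - {e} \<subseteq> P \<union> N"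
  shows "sb_connected U V P N"
  unfolding sb_connected_def
proof (intro ballI)
  fix x y assume xy: "x \<in> U" "y \<in> V"
  show "(x, y) \<in> reach (P \<union> N)"
  proof (cases "(x, y) = e")
    case False
    then show ?thesis using assms(7) xy by (intro reach_edge) auto
  next
    case True
    obtain x' where x': "x' \<in> U" "x' \<noteq> x" using assms(1-3) by metis
    obtain y' where y': "y' \<in> V" "y' \<noteq> y" using assms(4-6) by metis
    have "(x, y') \<in> P \<union> N" "(x', y') \<in> P \<union> N" "(x', y) \<in> P \<union> N"
      using assms(7) xy True x' y' by auto
    then have "(x, y') \<in> reach (P \<union> N)" "(y', x') \<in> reach (P \<union> N)" "(x', y) \<in> reach (P \<union> N)"
      using reach_edge reach_sym by blast+
    then show ?thesis
      using rtrancl_trans by metis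
  qed
qed

definition two_switch :: "('a \<times> 'a) set \<Rightarrow> 'a \<Rightarrow> 'a \<Rightarrow> 'a \<Rightarrow> 'a \<Rightarrow> ('a \<times> 'a) set" where
  "two_switch E a b c d = E - {(a, b), (c, d)} \<union> {(a, d), (c, b)}"

lemma two_switch_commute: "two_switch E a b c d = two_switch E c d a b"
  unfolding two_switch_def by auto

lemma card_insert_Diff_swap:
  "finite A \<Longrightarrow> a \<in> A \<Longrightarrow> b \<notin> A \<Longrightarrow> card (insert b (A - {a})) = card A"
  using card_Suc_Diff1 by fastforce

lemma inc_deg_two_switch:
  assumes "E \<subseteq> U \<times> V" "U \<inter> V = {}" "finite E"
    and "(a, b) \<in> E" "(c, d) \<in> E" "(a, d) \<notin> E" "(c, b) \<notin> E"
  shows "inc_deg (two_switch E a b c d) x = inc_deg E x"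
proof -
  have fin: "finite (nbrs E y)" for y
  proof -
    have "nbrs E y \<subseteq> fst ` E \<union> snd ` E" unfolding nbrs_def by force
    then show ?thesis using assms(3) by (meson finite_Un finite_imageI finite_subset)
  qed
  have ends: "a \<in> U" "c \<in> U" "b \<in> V" "d \<in> V"
    using assms by auto
  then have ends_distinct: "a \<noteq> c" "b \<noteq> d" "a \<noteq> b" "a \<noteq> d" "c \<noteq> b" "c \<noteq> d"
    using assms by auto
  have old: "b \<in> nbrs E a" "d \<in> nbrs E c" "a \<in> nbrs E b" "c \<in> nbrs E d"
    using assms(4,5) unfolding nbrs_def by auto
  have new: "d \<notin> nbrs E a" "b \<notin> nbrs E c" "c \<notin> nbrs E b" "a \<notin> nbrs E d"
    using assms(1,2,6,7) ends unfolding nbrs_def by auto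
  have switched: "nbrs (two_switch E a b c d) a = insert d (nbrs E a - {b})"
    "nbrs (two_switch E a b c d) c = insert b (nbrs E c - {d})"
    "nbrs (two_switch E a b c d) b = insert c (nbrs E b - {a})"
    "nbrs (two_switch E a b c d) d = insert a (nbrs E d - {c})"
    "x \<notin> {a, b, c, d} \<Longrightarrow> nbrs (two_switch E a b c d) x = nbrs E x"
    using assms(1,2) ends ends_distinct unfolding nbrs_def two_switch_def by auto
  consider "x = a" | "x = c" | "x = b" | "x = d" | "x \<notin> {a, b, c, d}" by blast
  then show ?thesis
    by cases
      (simp_all only: inc_deg_eq_card_nbrs switched card_insert_Diff_swap fin old new not_False_eq_True)
qed

lemma inc_deg_Un_outside_Field: "x \<notin> Field F \<Longrightarrow> inc_deg (E \<union> F) x = inc_deg E x"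
proof -
  assume "x \<notin> Field F"
  then have "nbrs (E \<union> F) x = nbrs E x" unfolding nbrs_def Field_def by blast
  then show ?thesis by (simp add: inc_deg_eq_card_nbrs)
qed

lemma reach_root_after_switch:
  assumes root1: "\<forall>x\<in>W1. (x, a) \<in> reach E1"
    and root2: "\<forall>x\<in>W2. (x, c) \<in> reach E2" and "d \<in> W2"
    and "E1 - {(a, b)} \<subseteq> F" "E2 \<subseteq> F" "(a, d) \<in> F" "(c, b) \<in> F"
  shows "\<forall>x\<in>W1 \<union> W2. (x, a) \<in> reach F"
proof
  have "(c, d) \<in> reach F"
    using root2 \<open>d \<in> W2\<close> \<open>E2 \<subseteq> F\<close> by (meson reach_mono reach_sym)
  then have c_a: "(c, a) \<in> reach F"
    using reach_sym[OF reach_edge[OF \<open>(a, d) \<in> F\<close>]] by (rule rtrancl_trans)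
  have b_a: "(b, a) \<in> reach F"
    using reach_sym[OF reach_edge[OF \<open>(c, b) \<in> F\<close>]] c_a by (rule rtrancl_trans)
  fix x assume "x \<in> W1 \<union> W2"
  then show "(x, a) \<in> reach F"
  proof
    assume "x \<in> W1"
    then have "(x, a) \<in> reach (E1 - {(a, b)}) \<or> (x, b) \<in> reach (E1 - {(a, b)})"
      using root1 reach_Diff_edge by fastforce
    then show ?thesis
      using \<open>E1 - {(a, b)} \<subseteq> F\<close> b_a by (meson reach_mono rtrancl_trans)
  next
    assume "x \<in> W2"
    then show ?thesis
      using root2 \<open>E2 \<subseteq> F\<close> c_a by (meson reach_mono rtrancl_trans)
  qed
qed

lemma inc_deg_complement_in_complete_bipartite:
  assumes "finite U" "finite V" "U \<inter> V = {}" "D \<subseteq> U \<times> V" "card U = n" "card V = n"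
    and "x \<in> U \<union> V"
  shows "inc_deg (U \<times> V - D) x = n - inc_deg D x"
proof -
  define W where "W = (if x \<in> U then V else U)"
  have "nbrs (U \<times> V - D) x = W - nbrs D x" "nbrs D x \<subseteq> W"
    using assms(3,4,7) unfolding W_def nbrs_def by auto
  moreover have "finite W" "card W = n"
    using assms unfolding W_def by auto
  ultimately show ?thesis
    by (simp add: inc_deg_eq_card_nbrs card_Diff_subset finite_subset)
qed

lemma sdeg_complete_bipartite_minus_matching:
  fixes M n :: nat
  defines "U \<equiv> {M..<M + n}" and "V \<equiv> {M + n..<M + 2 * n}"
    and "D \<equiv> (\<lambda>x. (x, x + n)) ` {M..<M + n}"
  assumes "x \<in> U \<union> V"
  shows "sdeg (U \<times> V - D) D x = int n - 2"
proof -
  have UV: "finite U" "finite V" "U \<inter> V = {}" "D \<subseteq> U \<times> V" "card U = n" "card V = n"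
    unfolding U_def V_def D_def by auto
  have "nbrs D x = (if x \<in> U then {x + n} else {x - n})"
    using assms(4) unfolding nbrs_def D_def U_def V_def by force
  then have "inc_deg D x = 1"
    by (simp add: inc_deg_eq_card_nbrs)
  moreover have "n \<ge> 1"
    using assms(4) unfolding U_def V_def by auto
  ultimately show ?thesis
    using inc_deg_complement_in_complete_bipartite[OF UV assms(4)] unfolding sdeg_def by simp
qed

lemma signed_bipartite_regular_exists:
  fixes t :: int and M :: nat
  obtains U V P N u v where "signed_bipartite U V P N" "sb_connected U V (P - {(u, v)}) N"
    "(u, v) \<in> P" "U \<union> V \<subseteq> {M..}" "\<forall>x\<in>U \<union> V. sdeg P N x = t"
proof -
  define n where "n = nat \<bar>t\<bar> + 2"
  define U where "U = {M..<M + n}"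
  define V where "V = {M + n..<M + 2 * n}"
  define D where "D = (\<lambda>x. (x, x + n)) ` U"
  define C where "C = U \<times> V - D"
  have sdeg_C: "sdeg C D x = int n - 2" if "x \<in> U \<union> V" for x
    using sdeg_complete_bipartite_minus_matching that unfolding C_def D_def U_def V_def by blast
  have "D \<subseteq> U \<times> V"
    unfolding D_def U_def V_def by auto
  then obtain P N e where PN: "P \<union> N = U \<times> V" "P \<inter> N = {}" "e \<in> P"
    and sdeg_t: "\<forall>x\<in>U \<union> V. sdeg P N x = t"
  proof (cases "t \<ge> 0")
    case True
    have "(M, M + n + 1) \<in> C" unfolding C_def D_def U_def V_def n_def by auto
    then show ?thesis
      using that[of C D] \<open>D \<subseteq> U \<times> V\<close> sdeg_C True unfolding C_def n_def by auto
  next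
    case False
    have "(M, M + n) \<in> D" unfolding D_def U_def n_def by auto
    moreover have "sdeg D C x = t" if "x \<in> U \<union> V" for x
      using sdeg_C[OF that] False unfolding sdeg_def n_def by simp
    ultimately show ?thesis
      using that[of D C] \<open>D \<subseteq> U \<times> V\<close> unfolding C_def by auto
  qed
  have "sb_connected U V (P - {e}) N"
    by (rule sb_connected_complete_bipartite_minus_edge[of M U "M + 1" "M + n" V "M + n + 1" e])
      (use PN in \<open>auto simp: U_def V_def n_def\<close>)
  moreover have "signed_bipartite U V P N"
    using PN unfolding signed_bipartite_def U_def V_def n_def by auto
  moreover have "U \<union> V \<subseteq> {M..}"
    unfolding U_def V_def by auto
  ultimately show ?thesis
    using that PN(3) sdeg_t by (metis prod.collapse)
qed

lemma sdeg_two_switch_Un: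
  assumes G: "signed_bipartite U V P N" and H: "signed_bipartite U' V' P' N'"
    and disj: "(U \<union> V) \<inter> (U' \<union> V') = {}"
    and "(u, v) \<in> P" "(u', v') \<in> P'" "x \<in> U \<union> V"
  shows "sdeg (two_switch (P \<union> P') u v u' v') (N \<union> N') x = sdeg P N x"
proof -
  have bip: "P \<subseteq> U \<times> V" "N \<subseteq> U \<times> V" "P' \<subseteq> U' \<times> V'" "N' \<subseteq> U' \<times> V'"
    "finite (U \<times> V)" "finite (U' \<times> V')" "U \<inter> V = {}" "U' \<inter> V' = {}"
    using G H unfolding signed_bipartite_def by auto
  have "inc_deg (two_switch (P \<union> P') u v u' v') x = inc_deg (P \<union> P') x"
  proof (rule inc_deg_two_switch[of _ "U \<union> U'" "V \<union> V'"])
    show "finite (P \<union> P')" using bip by (meson finite_Un finite_subset)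
  qed (use assms bip in auto)
  moreover have "x \<notin> Field P'" "x \<notin> Field N'"
    using assms(6) bip(3,4) disj unfolding Field_def by auto
  ultimately show ?thesis
    unfolding sdeg_def by (simp add: inc_deg_Un_outside_Field)
qed

lemma glue_by_two_switch:
  assumes G: "signed_bipartite U V P N" "sb_connected U V P N" "(u, v) \<in> P"
    and H: "signed_bipartite U' V' P' N'" "sb_connected U' V' (P' - {(u', v')}) N'" "(u', v') \<in> P'"
    and disj: "(U \<union> V) \<inter> (U' \<union> V') = {}"
  defines "Q \<equiv> two_switch (P \<union> P') u v u' v'"
  shows "signed_bipartite (U \<union> U') (V \<union> V') Q (N \<union> N')"
    and "sb_connected (U \<union> U') (V \<union> V') Q (N \<union> N')"
    and "\<forall>x\<in>U \<union> V. sdeg Q (N \<union> N') x = sdeg P N x"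
    and "\<forall>x\<in>U' \<union> V'. sdeg Q (N \<union> N') x = sdeg P' N' x"
proof -
  have bip: "P \<subseteq> U \<times> V" "N \<subseteq> U \<times> V" "P' \<subseteq> U' \<times> V'" "N' \<subseteq> U' \<times> V'"
    "P \<inter> N = {}" "P' \<inter> N' = {}" "U \<inter> V = {}" "U' \<inter> V' = {}"
    using G(1) H(1) unfolding signed_bipartite_def by auto
  show "signed_bipartite (U \<union> U') (V \<union> V') Q (N \<union> N')"
    unfolding signed_bipartite_def
  proof (intro conjI)
    show "Q \<subseteq> (U \<union> U') \<times> (V \<union> V')"
      using bip G(3) H(3) unfolding Q_def two_switch_def by auto
    show "Q \<inter> (N \<union> N') = {}"
      using bip disj G(3) H(3) unfolding Q_def two_switch_def by auto
  qed (use G(1) H(1) bip disj in \<open>auto simp: signed_bipartite_def\<close>)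
  show "\<forall>x\<in>U \<union> V. sdeg Q (N \<union> N') x = sdeg P N x"
    using sdeg_two_switch_Un[OF G(1) H(1) disj G(3) H(3)] unfolding Q_def by blast
  have "Q = two_switch (P' \<union> P) u' v' u v" "N \<union> N' = N' \<union> N"
    unfolding Q_def by (auto simp: two_switch_commute sup_commute)
  moreover have "(U' \<union> V') \<inter> (U \<union> V) = {}"
    using disj by auto
  ultimately show "\<forall>x\<in>U' \<union> V'. sdeg Q (N \<union> N') x = sdeg P' N' x"
    using sdeg_two_switch_Un[OF H(1) G(1) _ H(3) G(3)] by simp
  have u: "u \<in> U \<union> V" and u': "u' \<in> U' \<union> V'" "v' \<in> U' \<union> V'"
    using G(3) H(3) bip by auto
  have "\<forall>x\<in>(U \<union> V) \<union> (U' \<union> V'). (x, u) \<in> reach (Q \<union> (N \<union> N'))"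
  proof (rule reach_root_after_switch[where b = v and c = u' and d = v'])
    show "\<forall>x\<in>U \<union> V. (x, u) \<in> reach (P \<union> N)"
      using reach_root_if_sb_connected[OF G(1,2) u] by blast
    have "signed_bipartite U' V' (P' - {(u', v')}) N'"
      using H(1) unfolding signed_bipartite_def by auto
    then show "\<forall>x\<in>U' \<union> V'. (x, u') \<in> reach (P' - {(u', v')} \<union> N')"
      using reach_root_if_sb_connected[OF _ H(2) u'(1)] by blast
  qed (use u' bip disj G(3) H(3) in \<open>auto simp: Q_def two_switch_def\<close>)
  then show "sb_connected (U \<union> U') (V \<union> V') Q (N \<union> N')"
    by (intro sb_connected_if_reach_root) auto
qed

lemma signed_degree_set_realisable:
  fixes S :: "int set"
  assumes "finite S" and "S \<noteq> {}"
  shows "\<exists>U V P N. signed_bipartite U V P N \<and> sb_connected U V P N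
                   \<and> signed_degree_set U V P N = S \<and> P \<noteq> {}"
  using assms
proof (induction S rule: finite_ne_induct)
  case (singleton t)
  obtain U V P N u v where H: "signed_bipartite U V P N" "sb_connected U V (P - {(u, v)}) N"
    "(u, v) \<in> P" "U \<union> V \<subseteq> {0..}" "\<forall>x\<in>U \<union> V. sdeg P N x = t"
    by (rule signed_bipartite_regular_exists)
  have "sb_connected U V P N"
    using H(2) by (rule sb_connected_mono) blast
  moreover have "signed_degree_set U V P N = {t}"
    using H(1,5) unfolding signed_degree_set_def signed_bipartite_def by auto
  ultimately show ?case using H(1,3) by blast
next
  case (insert t S)
  then obtain U V P N where G: "signed_bipartite U V P N" "sb_connected U V P N"
    "signed_degree_set U V P N = S" "P \<noteq> {}" by blast
  define M where "M = Suc (Max (U \<union> V))"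
  obtain U' V' P' N' u' v' where H: "signed_bipartite U' V' P' N'"
    "sb_connected U' V' (P' - {(u', v')}) N'" "(u', v') \<in> P'" "U' \<union> V' \<subseteq> {M..}"
    "\<forall>x\<in>U' \<union> V'. sdeg P' N' x = t"
    by (rule signed_bipartite_regular_exists)
  have "finite (U \<union> V)" using G(1) unfolding signed_bipartite_def by auto
  then have "x < M" if "x \<in> U \<union> V" for x
    using Max_ge[OF _ that] unfolding M_def by (simp add: le_imp_less_Suc)
  then have disj: "(U \<union> V) \<inter> (U' \<union> V') = {}"
    using H(4) by fastforce
  obtain u v where "(u, v) \<in> P" using G(4) by auto
  note glued = glue_by_two_switch[OF G(1,2) this H(1-3) disj]
  let ?Q = "two_switch (P \<union> P') u v u' v'"
  have "signed_degree_set (U \<union> U') (V \<union> V') ?Q (N \<union> N')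
      = sdeg P N ` (U \<union> V) \<union> sdeg P' N' ` (U' \<union> V')"
    using glued(3,4) unfolding signed_degree_set_def by (auto simp: image_Un)
  also have "\<dots> = insert t S"
    using G(3) H(1,5) unfolding signed_degree_set_def signed_bipartite_def by auto
  finally show ?case
    using glued(1,2) unfolding two_switch_def by blast
qed

theorem theorem2p2:
  fixes S :: "int set"
  assumes "finite S" and "S \<noteq> {}"
  shows "\<exists>U V P N. signed_bipartite U V P N \<and> sb_connected U V P N
                   \<and> signed_degree_set U V P N = S"
  using signed_degree_set_realisable[OF assms] by blast

end
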